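(* Let $n\ge 2$ and let $\Delta(Q_{4n})$ be the commuting graph of the generalized quaternion group $Q_{4n}$. Then the Sombor spectrum of $\Delta(Q_{4n})$ consists of $-(4n-1)\sqrt2$ with multiplicity $1$, $-(2n-1)\sqrt2$ with multiplicity $2n-3$, $-3\sqrt2$ with multiplicity $n$, and the roots (with multiplicity) of \[\big(x-(4n-1)\sqrt2\big)\big(x-(2n-1)(2n-3)\sqrt2\big)(x-3\sqrt2)^n-8(n-1)(10n^2-6n+1)(x-3\sqrt2)^n-8n(8n^2-4n+5)\big(x-(2n-1)(2n-3)\sqrt2\big)(x-3\sqrt2)^{n-1}.\]
   Context: For a finite simple graph $\Gamma$ with vertices $u_1,\dots,u_N$, the Sombor matrix $S(\Gamma)$ has $(i,j)$ entry $\sqrt{\deg(u_i)^2+\deg(u_j)^2}$ if $u_i,u_j$ are adjacent and $0$ otherwise; the Sombor spectrum is the multiset of its eigenvalues. The generalized quaternion group is $Q_{4n}=\langle a,b: a^{2n}=e,\ a^n=b^2,\ ba=a^{-1}b\rangle$ of order $4n$. The commuting graph $\Delta(G)$ of a group $G$ has vertex set $G$, two distinct vertices $x,y$ being adjacent iff $xy=yx$. *)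

theory Defs
  imports "HOL-Algebra.Group" "Jordan_Normal_Form.Char_Poly"
    "HOL-Computational_Algebra.Fundamental_Theorem_Algebra"
begin

text \<open>The element a^i b^s (0 \<le> i < 2n, s \<in> {0,1}) is encoded by the natural
  number i + 2n*s, so the carrier is {0..<4n}. Multiplication follows from
  b a^k = a^{-k} b and b^2 = a^n:  a^i b^s * a^k b^t = a^{i + (-1)^s k + [s=t=1] n} b^{s+t}.\<close>

definition quat_exp :: "nat \<Rightarrow> nat \<Rightarrow> nat" where
  "quat_exp n x = x mod (2*n)"

definition quat_sgn :: "nat \<Rightarrow> nat \<Rightarrow> nat" where
  "quat_sgn n x = (if x < 2*n then 0 else 1)"

definition quat_mult :: "nat \<Rightarrow> nat \<Rightarrow> nat \<Rightarrow> nat" where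
  "quat_mult n x y =
     (let i = quat_exp n x; s = quat_sgn n x; k = quat_exp n y; t = quat_sgn n y;
          e = (if s = 0 then i + k else i + (2*n - k)) + (if s = 1 \<and> t = 1 then n else 0)
      in e mod (2*n) + 2*n*((s + t) mod 2))"

definition gen_quaternion_group :: "nat \<Rightarrow> nat monoid" where
  "gen_quaternion_group n = \<lparr>carrier = {0..<4*n}, mult = quat_mult n, one = 0\<rparr>"

definition commuting_adj :: "('a, 'b) monoid_scheme \<Rightarrow> 'a \<Rightarrow> 'a \<Rightarrow> bool" where
  "commuting_adj G x y \<longleftrightarrow>
     x \<in> carrier G \<and> y \<in> carrier G \<and> x \<noteq> y \<and> x \<otimes>\<^bsub>G\<^esub> y = y \<otimes>\<^bsub>G\<^esub> x"

definition graph_deg :: "nat \<Rightarrow> (nat \<Rightarrow> nat \<Rightarrow> bool) \<Rightarrow> nat \<Rightarrow> nat" where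
  "graph_deg N adj i = card {j. j < N \<and> adj i j}"

definition sombor_matrix :: "nat \<Rightarrow> (nat \<Rightarrow> nat \<Rightarrow> bool) \<Rightarrow> real mat" where
  "sombor_matrix N adj = mat N N (\<lambda>(i, j).
     if adj i j then sqrt ((real (graph_deg N adj i))^2 + (real (graph_deg N adj j))^2) else 0)"

definition sombor_spectrum :: "nat \<Rightarrow> (nat \<Rightarrow> nat \<Rightarrow> bool) \<Rightarrow> complex multiset" where
  "sombor_spectrum N adj = proots (char_poly (map_mat complex_of_real (sombor_matrix N adj)))"

end

theory Submission
  imports Defs
begin

(* The centre {e, a^n} of Q_4n commutes with everything, any two powers of a commute, and a^i b
   commutes only with the centre and with a^(i+n) b. So the commuting graph is K_2 joined to
   K_(2n-2) + n K_2, with degrees 4n-1, 2n-1 and 3 on the three classes, and the Sombor weights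
   depend only on the classes of the endpoints. In the basis formed by the indicator vectors of the
   three classes, of the pairs {a^i b, a^(i+n) b} for 0 < i < n, of the set of all a^(i+n) b, and
   the remaining unit vectors, the Sombor matrix becomes block upper triangular. One block is the
   3x3 quotient matrix of this equitable partition, with characteristic polynomial
   A B C - k1 C - k2 B; the other is upper triangular with diagonal -(4n-1) sqrt 2,
   -(2n-1) sqrt 2 (2n-3 times), 3 sqrt 2 (n-1 times) and -3 sqrt 2 (n times). The eigenvalue
   3 sqrt 2 accounts for the factor C^(n-1) of P. *)

section \<open>Characteristic polynomials\<close>

lemma char_poly_eq_of_intertwining:
  fixes A B L :: "'a :: field mat"
  assumes A: "A \<in> carrier_mat n n" and B: "B \<in> carrier_mat n n" and L: "L \<in> carrier_mat n n"
    and det: "det L \<noteq> 0" and AL: "A * L = L * B"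
  shows "char_poly A = char_poly B"
proof -
  obtain R where R: "R \<in> carrier_mat n n" "R * L = 1\<^sub>m n" "L * R = 1\<^sub>m n"
    using det_non_zero_imp_unit[OF L det] unfolding Units_def by (auto simp: ring_mat_def)
  have "A = A * (L * R)" using A R by simp
  also have "\<dots> = A * L * R" using A L R by (simp add: assoc_mult_mat)
  also have "\<dots> = L * B * R" using AL by simp
  finally have "similar_mat A B" using A B L R by (intro similar_matI[of A B L R n]) auto
  then show ?thesis by (rule char_poly_similar)
qed

lemma char_poly_four_block_lower_zero:
  fixes A1 :: "'a :: idom mat"
  assumes A1: "A1 \<in> carrier_mat m m" and A2: "A2 \<in> carrier_mat m k" and A4: "A4 \<in> carrier_mat k k"
  shows "char_poly (four_block_mat A1 A2 (0\<^sub>m k m) A4) = char_poly A1 * char_poly A4"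
proof -
  let ?cm = "\<lambda>A. [:0, 1:] \<cdot>\<^sub>m 1\<^sub>m (dim_row A) + map_mat (\<lambda>a. [:- a:]) A"
  have "?cm (four_block_mat A1 A2 (0\<^sub>m k m) A4)
      = four_block_mat (?cm A1) (map_mat (\<lambda>a. [:- a:]) A2) (0\<^sub>m k m) (?cm A4)"
    using A1 A2 A4 by (intro eq_matI) (auto simp: one_poly_def)
  moreover have "det \<dots> = det (?cm A1) * det (?cm A4)"
    using A1 A2 A4 by (intro det_four_block_mat_lower_left_zero[OF _ _ refl]) auto
  ultimately show ?thesis
    unfolding char_poly_defs using A1 A4 by simp
qed

lemma det_permute_rows_cols:
  assumes A: "(A :: 'a :: comm_ring_1 mat) \<in> carrier_mat n n" and p: "p permutes {0..<n}"
  shows "det (mat n n (\<lambda>(i, j). A $$ (p i, p j))) = det A"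
proof -
  let ?B = "mat n n (\<lambda>(i, j). A $$ (p i, j))"
  have "mat n n (\<lambda>(i, j). A $$ (p i, p j))
      = transpose_mat (mat n n (\<lambda>(i, j). transpose_mat ?B $$ (p i, j)))"
    by (rule eq_matI) (auto simp: permutes_nat_less[OF p])
  then have "det (mat n n (\<lambda>(i, j). A $$ (p i, p j))) = signof p * det (transpose_mat ?B)"
    using det_permute_rows[OF _ p, of "transpose_mat ?B"]
      det_transpose[of "mat n n (\<lambda>(i, j). transpose_mat ?B $$ (p i, j))" n] by simp
  also have "\<dots> = signof p * signof p * det A"
    using det_permute_rows[OF A p] det_transpose[of ?B n] by simp
  also have "signof p * signof p = (1 :: 'a)"
    by (simp add: sign_def)
  finally show ?thesis by simp
qed

lemma char_poly_permute_rows_cols: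
  assumes A: "(A :: 'a :: comm_ring_1 mat) \<in> carrier_mat n n" and p: "p permutes {0..<n}"
  shows "char_poly (mat n n (\<lambda>(i, j). A $$ (p i, p j))) = char_poly A"
proof -
  have "p i = p j \<longleftrightarrow> i = j" for i j
    using permutes_inj[OF p] by (auto dest: injD)
  then have "char_poly_matrix (mat n n (\<lambda>(i, j). A $$ (p i, p j)))
      = mat n n (\<lambda>(i, j). char_poly_matrix A $$ (p i, p j))"
    using A by (intro eq_matI) (auto simp: char_poly_matrix_def permutes_nat_less[OF p])
  then show ?thesis
    unfolding char_poly_def using det_permute_rows_cols[OF _ p, of "char_poly_matrix A"] A by simp
qed

lemma det_2x2:
  assumes "(A :: 'a :: comm_ring_1 mat) \<in> carrier_mat 2 2"
  shows "det A = A $$ (0,0) * A $$ (1,1) - A $$ (0,1) * A $$ (1,0)"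
  using assms by (simp add: laplace_expansion_row[OF assms, of 0] numeral_2_eq_2
      cofactor_def det_single mat_delete_def)

lemma det_3x3:
  assumes A: "(A :: 'a :: comm_ring_1 mat) \<in> carrier_mat 3 3"
  shows "det A = A$$(0,0) * A$$(1,1) * A$$(2,2) - A$$(0,0) * A$$(1,2) * A$$(2,1)
     - A$$(0,1) * A$$(1,0) * A$$(2,2) + A$$(0,1) * A$$(1,2) * A$$(2,0)
     + A$$(0,2) * A$$(1,0) * A$$(2,1) - A$$(0,2) * A$$(1,1) * A$$(2,0)"
proof -
  have "det A = A $$ (0,0) * cofactor A 0 0 + A $$ (0,1) * cofactor A 0 1 + A $$ (0,2) * cofactor A 0 2"
    using laplace_expansion_row[OF A, of 0] by (simp add: numeral_3_eq_3 numeral_2_eq_2)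
  then show ?thesis
    unfolding cofactor_def using A
    by (subst (asm) (1 2 3) det_2x2) (auto simp: mat_delete_def algebra_simps numeral_3_eq_3 numeral_2_eq_2)
qed

lemma proots_of_real_linear_factors:
  fixes a b c :: real and Q :: "real poly"
  assumes "Q \<noteq> 0"
  shows "proots (map_poly complex_of_real ([:- a, 1:] * [:- b, 1:] ^ k * [:- c, 1:] ^ m * Q))
    = replicate_mset 1 (complex_of_real a) + replicate_mset k (complex_of_real b)
      + replicate_mset m (complex_of_real c) + proots (map_poly complex_of_real Q)"
proof -
  interpret of_real: map_poly_comm_ring_hom complex_of_real ..
  let ?l = "\<lambda>x. [:- complex_of_real x, 1:]"
  have "map_poly complex_of_real ([:- a, 1:] * [:- b, 1:] ^ k * [:- c, 1:] ^ m * Q)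
      = ?l a * ?l b ^ k * ?l c ^ m * map_poly complex_of_real Q"
    by (simp only: of_real.hom_mult of_real.hom_power) simp
  moreover have "?l x ^ j \<noteq> 0" for x j
    by simp
  moreover have "map_poly complex_of_real Q \<noteq> 0"
    using assms by simp
  ultimately show ?thesis
    by (simp add: proots_mult proots_power del: mult_pCons_left)
qed

lemma sqrt_double_square: "0 \<le> (y :: real) \<Longrightarrow> sqrt (y^2 + y^2) = y * sqrt 2"
  by (simp add: real_sqrt_mult flip: mult_2_right)

section \<open>The commuting graph of the generalized quaternion group\<close>

lemma mod_eq_if_less_three_times:
  assumes "(a :: nat) < 3 * m"
  shows "a mod m = (if a < m then a else if a < 2 * m then a - m else a - 2 * m)"
  using assms by (auto simp: le_mod_geq mod_if)

definition quat_commuting :: "nat \<Rightarrow> nat \<Rightarrow> nat \<Rightarrow> bool" where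
  "quat_commuting n x y \<longleftrightarrow> x < 4*n \<and> y < 4*n \<and> x \<noteq> y \<and>
     (x = 0 \<or> x = n \<or> y = 0 \<or> y = n \<or> (x < 2*n \<and> y < 2*n) \<or>
      (2*n \<le> x \<and> 2*n \<le> y \<and> (x = y + n \<or> y = x + n)))"

lemma quat_mult_commute_iff:
  assumes "1 \<le> n" and "x < 4*n" and "y < 4*n"
  shows "quat_mult n x y = quat_mult n y x \<longleftrightarrow>
    x = 0 \<or> x = n \<or> y = 0 \<or> y = n \<or> (x < 2*n \<and> y < 2*n) \<or>
    (2*n \<le> x \<and> 2*n \<le> y \<and> (x = y + n \<or> y = x + n \<or> x = y))"
  using assms mod_eq_if_less_three_times[of _ "2*n"]
  unfolding quat_mult_def quat_exp_def quat_sgn_def Let_def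
  by (cases "x < 2*n"; cases "y < 2*n") (auto split: if_splits)

lemma commuting_adj_gen_quaternion_group:
  "1 \<le> n \<Longrightarrow> commuting_adj (gen_quaternion_group n) = quat_commuting n"
  unfolding commuting_adj_def gen_quaternion_group_def quat_commuting_def
  by (intro ext) (auto simp: quat_mult_commute_iff)

section \<open>A block triangular form of the Sombor matrix\<close>

locale quat_commuting_graph =
  fixes n :: nat
  assumes two_le_n: "2 \<le> n"
begin

abbreviation adj :: "nat \<Rightarrow> nat \<Rightarrow> bool" where
  "adj \<equiv> quat_commuting n"

definition deg :: "nat \<Rightarrow> nat" where
  "deg i = (if i = 0 \<or> i = n then 4*n - 1 else if i < 2*n then 2*n - 1 else 3)"

lemma graph_deg_eq:
  assumes i: "i < 4*n"
  shows "graph_deg (4*n) adj i = deg i"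
proof -
  consider "i = 0 \<or> i = n" | "i \<noteq> 0 \<and> i \<noteq> n \<and> i < 2*n" | "2*n \<le> i \<and> i < 3*n" | "3*n \<le> i"
    using i by linarith
  then show ?thesis
  proof cases
    case 1
    then have "{j. j < 4*n \<and> adj i j} = {0..<4*n} - {i}"
      using i two_le_n unfolding quat_commuting_def by auto
    then show ?thesis using 1 i unfolding graph_deg_def deg_def by auto
  next
    case 2
    then have "{j. j < 4*n \<and> adj i j} = {0..<2*n} - {i}"
      using i two_le_n unfolding quat_commuting_def by auto
    then show ?thesis using 2 i unfolding graph_deg_def deg_def by auto
  next
    case 3
    then have "{j. j < 4*n \<and> adj i j} = {0, n, i + n}"
      using i two_le_n unfolding quat_commuting_def by auto
    then show ?thesis using 3 i two_le_n unfolding graph_deg_def deg_def by auto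
  next
    case 4
    then have "{j. j < 4*n \<and> adj i j} = {0, n, i - n}"
      using i two_le_n unfolding quat_commuting_def by auto
    then show ?thesis using 4 i two_le_n unfolding graph_deg_def deg_def by auto
  qed
qed

definition weight :: "nat \<Rightarrow> nat \<Rightarrow> real" where
  "weight i j = sqrt ((real (deg i))^2 + (real (deg j))^2)"

(* 0, 1 and 2n represent the centre, the non-central rotations and the reflections. *)
abbreviation "wZ \<equiv> weight 0 0"
abbreviation "wZR \<equiv> weight 0 1"
abbreviation "wZF \<equiv> weight 0 (2*n)"
abbreviation "wR \<equiv> weight 1 1"
abbreviation "wF \<equiv> weight (2*n) (2*n)"

definition entry :: "nat \<Rightarrow> nat \<Rightarrow> real" where
  "entry i j = (if adj i j then weight i j else 0)"

definition S :: "real mat" where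
  "S = mat (4*n) (4*n) (\<lambda>(i, j). entry i j)"

lemma S_carrier: "S \<in> carrier_mat (4*n) (4*n)"
  by (simp add: S_def)

lemma sombor_matrix_eq_S: "sombor_matrix (4*n) adj = S"
  unfolding sombor_matrix_def S_def entry_def weight_def
  by (rule eq_matI) (auto simp: graph_deg_eq)

lemma sombor_spectrum_commuting_graph:
  "sombor_spectrum (4*n) (commuting_adj (gen_quaternion_group n))
    = proots (map_poly complex_of_real (char_poly S))"
  using two_le_n of_real_hom.char_poly_hom[OF S_carrier, where 'a = complex]
  by (simp add: sombor_spectrum_def commuting_adj_gen_quaternion_group sombor_matrix_eq_S)

lemma char_poly_S_nonzero: "char_poly S \<noteq> 0"
  using degree_monic_char_poly[OF S_carrier] by auto

lemma sum_entry_centre: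
  assumes "i < 4*n"
  shows "(\<Sum>l\<in>{0, n}. entry i l) = (if i = 0 \<or> i = n then wZ else if i < 2*n then 2 * wZR else 2 * wZF)"
  using assms two_le_n by (auto simp: entry_def quat_commuting_def weight_def deg_def)

lemma sum_entry_rotations:
  assumes i: "i < 4*n"
  shows "(\<Sum>l\<in>{1..<2*n} - {n}. entry i l)
    = (if i = 0 \<or> i = n then real (2*n - 2) * wZR else if i < 2*n then real (2*n - 3) * wR else 0)"
proof -
  have card: "card ({1..<2*n} - {n}) = 2*n - 2"
    using two_le_n by (simp add: card_Diff_singleton)
  consider "i = 0 \<or> i = n" | "i \<noteq> 0 \<and> i \<noteq> n \<and> i < 2*n" | "2*n \<le> i"
    using i by linarith
  then show ?thesis
  proof cases
    case 1
    then have "(\<Sum>l\<in>{1..<2*n} - {n}. entry i l) = (\<Sum>l\<in>{1..<2*n} - {n}. wZR)"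
      using two_le_n by (intro sum.cong) (auto simp: entry_def quat_commuting_def weight_def deg_def)
    then show ?thesis using 1 card by simp
  next
    case 2
    then have i_in: "i \<in> {1..<2*n} - {n}" by auto
    have "(\<Sum>l\<in>{1..<2*n} - {n}. entry i l) = entry i i + (\<Sum>l\<in>{1..<2*n} - {n} - {i}. entry i l)"
      using i_in by (simp add: sum.remove)
    also have "(\<Sum>l\<in>{1..<2*n} - {n} - {i}. entry i l) = (\<Sum>l\<in>{1..<2*n} - {n} - {i}. wR)"
      using 2 two_le_n by (intro sum.cong) (auto simp: entry_def quat_commuting_def weight_def deg_def)
    finally have "(\<Sum>l\<in>{1..<2*n} - {n}. entry i l) = entry i i + (\<Sum>l\<in>{1..<2*n} - {n} - {i}. wR)" .
    moreover have "card ({1..<2*n} - {n} - {i}) = 2*n - 3"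
      using card i_in by (simp add: card_Diff_singleton)
    ultimately show ?thesis using 2 by (simp add: entry_def quat_commuting_def)
  next
    case 3
    then have "(\<Sum>l\<in>{1..<2*n} - {n}. entry i l) = (\<Sum>l\<in>{1..<2*n} - {n}. 0)"
      using two_le_n by (intro sum.cong) (auto simp: entry_def quat_commuting_def)
    then show ?thesis using 3 two_le_n by simp
  qed
qed

lemma sum_entry_reflections:
  assumes i: "i < 4*n"
  shows "(\<Sum>l\<in>{2*n..<4*n}. entry i l) = (if i = 0 \<or> i = n then real (2*n) * wZF else if i < 2*n then 0 else wF)"
proof -
  consider "i = 0 \<or> i = n" | "i \<noteq> 0 \<and> i \<noteq> n \<and> i < 2*n" | "2*n \<le> i"
    using i by linarith
  then show ?thesis
  proof cases
    case 1
    then have "(\<Sum>l\<in>{2*n..<4*n}. entry i l) = (\<Sum>l\<in>{2*n..<4*n}. wZF)"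
      using two_le_n by (intro sum.cong) (auto simp: entry_def quat_commuting_def weight_def deg_def)
    then show ?thesis using 1 by simp
  next
    case 2
    then have "(\<Sum>l\<in>{2*n..<4*n}. entry i l) = (\<Sum>l\<in>{2*n..<4*n}. 0)"
      using two_le_n by (intro sum.cong) (auto simp: entry_def quat_commuting_def)
    then show ?thesis using 2 by simp
  next
    case 3
    define partner where "partner = (if i < 3*n then i + n else i - n)"
    have partner: "partner \<in> {2*n..<4*n}"
      using 3 i two_le_n unfolding partner_def by auto
    have "(\<Sum>l\<in>{2*n..<4*n}. entry i l) = (\<Sum>l\<in>{2*n..<4*n}. if l = partner then wF else 0)"
      using 3 i two_le_n
      by (intro sum.cong) (auto simp: entry_def quat_commuting_def weight_def deg_def partner_def)
    then show ?thesis using 3 partner by simp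
  qed
qed

lemma sum_entry_upper_reflections:
  assumes i: "i < 4*n"
  shows "(\<Sum>l\<in>{3*n..<4*n}. entry i l)
    = (if i = 0 \<or> i = n then real n * wZF else if 2*n \<le> i \<and> i < 3*n then wF else 0)"
proof -
  consider "i = 0 \<or> i = n" | "i \<noteq> 0 \<and> i \<noteq> n \<and> i < 2*n" | "2*n \<le> i \<and> i < 3*n" | "3*n \<le> i"
    using i by linarith
  then show ?thesis
  proof cases
    case 1
    then have "(\<Sum>l\<in>{3*n..<4*n}. entry i l) = (\<Sum>l\<in>{3*n..<4*n}. wZF)"
      using two_le_n by (intro sum.cong) (auto simp: entry_def quat_commuting_def weight_def deg_def)
    then show ?thesis using 1 by simp
  next
    case 2
    then have "(\<Sum>l\<in>{3*n..<4*n}. entry i l) = (\<Sum>l\<in>{3*n..<4*n}. 0)"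
      using two_le_n by (intro sum.cong) (auto simp: entry_def quat_commuting_def)
    then show ?thesis using 2 by simp
  next
    case 3
    then have "(\<Sum>l\<in>{3*n..<4*n}. entry i l) = (\<Sum>l\<in>{3*n..<4*n}. if l = i + n then wF else 0)"
      using i two_le_n by (intro sum.cong) (auto simp: entry_def quat_commuting_def weight_def deg_def)
    then show ?thesis using 3 i by simp
  next
    case 4
    then have "(\<Sum>l\<in>{3*n..<4*n}. entry i l) = (\<Sum>l\<in>{3*n..<4*n}. 0)"
      using two_le_n by (intro sum.cong) (auto simp: entry_def quat_commuting_def)
    then show ?thesis using 4 two_le_n by simp
  qed
qed

definition cell :: "nat \<Rightarrow> nat set" where
  "cell v = (if v = 0 then {0, n} else if v = 1 then {1..<2*n} - {n}
     else if v = 2*n then {2*n..<4*n} else if v = 3*n then {3*n..<4*n}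
     else if 2*n < v \<and> v < 3*n then {v, v + n} else {v})"

(* Since the least element of cell v is v, the matrix L is unit lower triangular. *)
definition L :: "real mat" where
  "L = mat (4*n) (4*n) (\<lambda>(i, v). of_bool (i \<in> cell v))"

(* tcoef p v is the coefficient of column p of L in S times column v of L. *)
definition tcoef :: "nat \<Rightarrow> nat \<Rightarrow> real" where
  "tcoef p v =
    (if v = 0 then (if p = 0 then wZ else if p = 1 then 2 * wZR else if p = 2*n then 2 * wZF else 0)
     else if v = 1 then (if p = 0 then real (2*n - 2) * wZR else if p = 1 then real (2*n - 3) * wR else 0)
     else if v = 2*n then (if p = 0 then real (2*n) * wZF else if p = 2*n then wF else 0)
     else if v = 3*n then (if p = 0 then real n * wZF else if p = 2*n then wF else if p = 3*n then - wF else 0)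
     else if v = n then
       (if p = 0 then wZ else if p = n then - wZ else if p = 1 then wZR else if p = 2*n then wZF else 0)
     else if v < 2*n then (if p = 0 then wZR else if p = 1 then wR else if p = v then - wR else 0)
     else if v < 3*n then (if p = 0 then 2 * wZF else if p = v then wF else 0)
     else (if p = 0 then wZF else if p = v - n then wF else if p = v then - wF else 0))"

definition T :: "real mat" where
  "T = mat (4*n) (4*n) (\<lambda>(p, v). tcoef p v)"

lemma cell_subset: "v < 4*n \<Longrightarrow> cell v \<subseteq> {0..<4*n}"
  using two_le_n by (auto simp: cell_def)

lemma S_L_entry:
  assumes "i < 4*n" and "v < 4*n"
  shows "(S * L) $$ (i, v) = (\<Sum>l\<in>cell v. entry i l)"
proof -
  have "(S * L) $$ (i, v) = (\<Sum>l\<in>{0..<4*n}. entry i l * of_bool (l \<in> cell v))"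
    using assms by (simp add: S_def L_def scalar_prod_def)
  also have "\<dots> = (\<Sum>l\<in>{0..<4*n} \<inter> {l. l \<in> cell v}. entry i l)"
    by (simp add: sum_mult_of_bool_eq)
  also have "{0..<4*n} \<inter> {l. l \<in> cell v} = cell v"
    using cell_subset[OF assms(2)] by auto
  finally show ?thesis .
qed

lemma L_T_entry:
  assumes "i < 4*n" and "v < 4*n" and "P \<subseteq> {0..<4*n}"
    and "\<And>p. p < 4*n \<Longrightarrow> p \<notin> P \<Longrightarrow> tcoef p v = 0"
  shows "(L * T) $$ (i, v) = (\<Sum>p\<in>P. of_bool (i \<in> cell p) * tcoef p v)"
proof -
  have "(L * T) $$ (i, v) = (\<Sum>p\<in>{0..<4*n}. of_bool (i \<in> cell p) * tcoef p v)"
    using assms(1,2) by (simp add: T_def L_def scalar_prod_def)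
  also have "\<dots> = (\<Sum>p\<in>P. of_bool (i \<in> cell p) * tcoef p v)"
    using assms(3,4) by (intro sum.mono_neutral_right) auto
  finally show ?thesis .
qed

lemma S_L_col_centre:
  assumes i: "i < 4*n"
  shows "(S * L) $$ (i, 0) = (L * T) $$ (i, 0)"
proof -
  have "(S * L) $$ (i, 0) = (\<Sum>l\<in>{0, n}. entry i l)"
    using S_L_entry[OF i, of 0] two_le_n by (simp add: cell_def)
  also have "\<dots> = (\<Sum>p\<in>{0, 1, 2*n}. of_bool (i \<in> cell p) * tcoef p 0)"
    unfolding sum_entry_centre[OF i] using i two_le_n
    by (auto simp: cell_def tcoef_def simp del: sum_of_bool_mult_eq)
  also have "\<dots> = (L * T) $$ (i, 0)"
    using i two_le_n by (intro L_T_entry[symmetric]) (auto simp: tcoef_def)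
  finally show ?thesis .
qed

lemma S_L_col_rotations:
  assumes i: "i < 4*n"
  shows "(S * L) $$ (i, 1) = (L * T) $$ (i, 1)"
proof -
  have "(S * L) $$ (i, 1) = (\<Sum>l\<in>{1..<2*n} - {n}. entry i l)"
    using S_L_entry[OF i, of 1] two_le_n by (simp add: cell_def)
  also have "\<dots> = (\<Sum>p\<in>{0, 1}. of_bool (i \<in> cell p) * tcoef p 1)"
    unfolding sum_entry_rotations[OF i] using i two_le_n
    by (auto simp: cell_def tcoef_def simp del: sum_of_bool_mult_eq)
  also have "\<dots> = (L * T) $$ (i, 1)"
    using i two_le_n by (intro L_T_entry[symmetric]) (auto simp: tcoef_def)
  finally show ?thesis .
qed

lemma S_L_col_reflections:
  assumes i: "i < 4*n"
  shows "(S * L) $$ (i, 2*n) = (L * T) $$ (i, 2*n)"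
proof -
  have "(S * L) $$ (i, 2*n) = (\<Sum>l\<in>{2*n..<4*n}. entry i l)"
    using S_L_entry[OF i, of "2*n"] two_le_n by (simp add: cell_def)
  also have "\<dots> = (\<Sum>p\<in>{0, 2*n}. of_bool (i \<in> cell p) * tcoef p (2*n))"
    unfolding sum_entry_reflections[OF i] using i two_le_n
    by (auto simp: cell_def tcoef_def simp del: sum_of_bool_mult_eq)
  also have "\<dots> = (L * T) $$ (i, 2*n)"
    using i two_le_n by (intro L_T_entry[symmetric]) (auto simp: tcoef_def)
  finally show ?thesis .
qed

lemma S_L_col_upper_reflections:
  assumes i: "i < 4*n"
  shows "(S * L) $$ (i, 3*n) = (L * T) $$ (i, 3*n)"
proof -
  have "(S * L) $$ (i, 3*n) = (\<Sum>l\<in>{3*n..<4*n}. entry i l)"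
    using S_L_entry[OF i, of "3*n"] two_le_n by (simp add: cell_def)
  also have "\<dots> = (\<Sum>p\<in>{0, 2*n, 3*n}. of_bool (i \<in> cell p) * tcoef p (3*n))"
    unfolding sum_entry_upper_reflections[OF i] using i two_le_n
    by (auto simp: cell_def tcoef_def simp del: sum_of_bool_mult_eq)
  also have "\<dots> = (L * T) $$ (i, 3*n)"
    using i two_le_n by (intro L_T_entry[symmetric]) (auto simp: tcoef_def)
  finally show ?thesis .
qed

lemma S_L_col_reflection_pair:
  assumes i: "i < 4*n" and v: "2*n < v" "v < 3*n"
  shows "(S * L) $$ (i, v) = (L * T) $$ (i, v)"
proof -
  have "(S * L) $$ (i, v) = entry i v + entry i (v + n)"
    using S_L_entry[OF i, of v] v two_le_n by (simp add: cell_def)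
  also have "\<dots> = (\<Sum>p\<in>{0, v}. of_bool (i \<in> cell p) * tcoef p v)"
    using i v two_le_n by (auto simp: cell_def tcoef_def entry_def quat_commuting_def weight_def deg_def
        simp del: sum_of_bool_mult_eq)
  also have "\<dots> = (L * T) $$ (i, v)"
    using i v two_le_n by (intro L_T_entry[symmetric]) (auto simp: tcoef_def)
  finally show ?thesis .
qed

lemma S_L_col_unit:
  assumes i: "i < 4*n" and v: "v < 4*n" "v \<notin> {0, 1, 2*n, 3*n}" "\<not> (2*n < v \<and> v < 3*n)"
  shows "(S * L) $$ (i, v) = (L * T) $$ (i, v)"
proof -
  have SL: "(S * L) $$ (i, v) = entry i v"
    using S_L_entry[OF i v(1)] v by (auto simp: cell_def)
  consider "v = n" | "v < 2*n \<and> v \<noteq> n" | "3*n < v"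
    using v by fastforce
  then show ?thesis
  proof cases
    case 1
    have "entry i v = (\<Sum>p\<in>{0, 1, n, 2*n}. of_bool (i \<in> cell p) * tcoef p v)"
      using i two_le_n 1 by (auto simp: cell_def tcoef_def entry_def quat_commuting_def weight_def deg_def
          simp del: sum_of_bool_mult_eq)
    also have "\<dots> = (L * T) $$ (i, v)"
      using i v two_le_n 1 by (intro L_T_entry[symmetric]) (auto simp: tcoef_def)
    finally show ?thesis using SL by simp
  next
    case 2
    have "entry i v = (\<Sum>p\<in>{0, 1, v}. of_bool (i \<in> cell p) * tcoef p v)"
      using i two_le_n 2 v by (auto simp: cell_def tcoef_def entry_def quat_commuting_def weight_def deg_def
          simp del: sum_of_bool_mult_eq)
    also have "\<dots> = (L * T) $$ (i, v)"
      using i v two_le_n 2 by (intro L_T_entry[symmetric]) (auto simp: tcoef_def)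
    finally show ?thesis using SL by simp
  next
    case 3
    have "entry i v = (\<Sum>p\<in>{0, v - n, v}. of_bool (i \<in> cell p) * tcoef p v)"
      using i two_le_n 3 v by (auto simp: cell_def tcoef_def entry_def quat_commuting_def weight_def deg_def
          simp del: sum_of_bool_mult_eq)
    also have "\<dots> = (L * T) $$ (i, v)"
      using i v two_le_n 3 by (intro L_T_entry[symmetric]) (auto simp: tcoef_def)
    finally show ?thesis using SL by simp
  qed
qed

lemma S_L_eq_L_T: "S * L = L * T"
proof (rule eq_matI)
  fix i v
  assume "i < dim_row (L * T)" and "v < dim_col (L * T)"
  then have i: "i < 4*n" and v: "v < 4*n"
    by (auto simp: L_def T_def)
  consider "v = 0" | "v = 1" | "v = 2*n" | "v = 3*n" | "2*n < v \<and> v < 3*n"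
    | "v \<notin> {0, 1, 2*n, 3*n} \<and> \<not> (2*n < v \<and> v < 3*n)"
    by blast
  then show "(S * L) $$ (i, v) = (L * T) $$ (i, v)"
  proof cases
    case 1
    then show ?thesis using S_L_col_centre[OF i] by simp
  next
    case 2
    then show ?thesis using S_L_col_rotations[OF i] by simp
  next
    case 3
    then show ?thesis using S_L_col_reflections[OF i] by simp
  next
    case 4
    then show ?thesis using S_L_col_upper_reflections[OF i] by simp
  next
    case 5
    then show ?thesis using S_L_col_reflection_pair[OF i] by simp
  next
    case 6
    then show ?thesis using S_L_col_unit[OF i v] by simp
  qed
qed (auto simp: S_def L_def T_def)

lemma det_L: "det L = 1"
proof -
  have "det L = prod_list (diag_mat L)"
    using two_le_n by (intro det_lower_triangular[of "4*n"]) (auto simp: L_def cell_def)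
  also have "diag_mat L = replicate (4*n) 1"
    using two_le_n by (intro nth_equalityI) (auto simp: diag_mat_def L_def cell_def)
  finally show ?thesis by simp
qed

lemma char_poly_S_eq_T: "char_poly S = char_poly T"
  using S_L_eq_L_T det_L
  by (intro char_poly_eq_of_intertwining[of _ "4*n" _ L]) (auto simp: S_def L_def T_def)

lemma tcoef_nonzero_cases:
  "tcoef p v \<noteq> 0 \<Longrightarrow> p \<in> {0, 1, 2*n, v} \<or> (3*n < v \<and> p = v - n)"
  by (auto simp: tcoef_def split: if_splits)

lemma tcoef_nonzero_cells: "v \<in> {0, 1, 2*n} \<Longrightarrow> tcoef p v \<noteq> 0 \<Longrightarrow> p \<in> {0, 1, 2*n}"
  using two_le_n by (auto simp: tcoef_def split: if_splits)

(* Moves the reflection class 2n to position 2, so that the three classes come first. *)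
definition reorder :: "nat \<Rightarrow> nat" where
  "reorder k = (if k = 2 then 2*n else if 3 \<le> k \<and> k \<le> 2*n then k - 1 else k)"

lemma reorder_permutes: "reorder permutes {0..<4*n}"
proof (rule bij_imp_permutes)
  define restore where "restore v = (if v = 2*n then 2 else if 2 \<le> v \<and> v < 2*n then v + 1 else v)" for v
  show "bij_betw reorder {0..<4*n} {0..<4*n}"
    using two_le_n by (intro bij_betw_byWitness[of _ restore]) (auto simp: reorder_def restore_def)
  show "x \<notin> {0..<4*n} \<Longrightarrow> reorder x = x" for x
    using two_le_n by (auto simp: reorder_def)
qed

lemma reorder_less: "k < 4*n \<Longrightarrow> reorder k < 4*n"
  using two_le_n by (auto simp: reorder_def)

lemma reorder_eq_iff: "reorder k = reorder l \<longleftrightarrow> k = l"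
  using two_le_n by (auto simp: reorder_def)

lemma reorder_in_cells_iff: "reorder k \<in> {0, 1, 2*n} \<longleftrightarrow> k < 3"
  using two_le_n by (auto simp: reorder_def)

lemma reorder_fixes_upper: "2*n < k \<Longrightarrow> reorder k = k" "2*n < reorder k \<Longrightarrow> reorder k = k"
  using two_le_n by (auto simp: reorder_def)

definition Quot :: "real mat" where
  "Quot = mat 3 3 (\<lambda>(k, l). tcoef (reorder k) (reorder l))"

definition X :: "real mat" where
  "X = mat 3 (4*n - 3) (\<lambda>(k, l). tcoef (reorder k) (reorder (l + 3)))"

definition U :: "real mat" where
  "U = mat (4*n - 3) (4*n - 3) (\<lambda>(k, l). tcoef (reorder (k + 3)) (reorder (l + 3)))"

lemma T_reordered_block:
  "mat (4*n) (4*n) (\<lambda>(k, l). T $$ (reorder k, reorder l)) = four_block_mat Quot X (0\<^sub>m (4*n - 3) 3) U"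
proof (rule eq_matI)
  fix k l
  assume "k < dim_row (four_block_mat Quot X (0\<^sub>m (4*n - 3) 3) U)"
    and "l < dim_col (four_block_mat Quot X (0\<^sub>m (4*n - 3) 3) U)"
  then have k: "k < 4*n" and l: "l < 4*n"
    using two_le_n by (auto simp: Quot_def U_def)
  have zero: "tcoef (reorder k) (reorder l) = 0" if "\<not> k < 3" "l < 3"
    using that tcoef_nonzero_cells[of "reorder l" "reorder k"] reorder_in_cells_iff by blast
  show "mat (4*n) (4*n) (\<lambda>(k, l). T $$ (reorder k, reorder l)) $$ (k, l)
      = four_block_mat Quot X (0\<^sub>m (4*n - 3) 3) U $$ (k, l)"
    using k l two_le_n zero by (simp add: T_def Quot_def X_def U_def reorder_less)
qed (use two_le_n in \<open>auto simp: Quot_def U_def\<close>)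

lemma U_upper_triangular: "upper_triangular U"
proof (rule upper_triangularI)
  fix k l
  assume lk: "l < k" and "k < dim_row U"
  then have k: "k < 4*n - 3" by (simp add: U_def)
  have "tcoef (reorder (k + 3)) (reorder (l + 3)) = 0"
  proof (rule ccontr)
    assume "tcoef (reorder (k + 3)) (reorder (l + 3)) \<noteq> 0"
    from tcoef_nonzero_cases[OF this] reorder_in_cells_iff[of "k + 3"] reorder_eq_iff[of "k + 3" "l + 3"] lk
    have "3*n < reorder (l + 3) \<and> reorder (k + 3) = reorder (l + 3) - n"
      by auto
    with reorder_fixes_upper[of "l + 3"] reorder_fixes_upper[of "k + 3"] lk two_le_n show False
      by auto
  qed
  then show "U $$ (k, l) = 0"
    using lk k by (simp add: U_def)
qed

lemma char_poly_S_block: "char_poly S = char_poly Quot * char_poly U"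
proof -
  have "char_poly S = char_poly (mat (4*n) (4*n) (\<lambda>(k, l). T $$ (reorder k, reorder l)))"
    using char_poly_permute_rows_cols[OF _ reorder_permutes, of T] char_poly_S_eq_T by (simp add: T_def)
  also have "\<dots> = char_poly Quot * char_poly U"
    unfolding T_reordered_block
    using two_le_n by (intro char_poly_four_block_lower_zero) (auto simp: Quot_def X_def U_def)
  finally show ?thesis .
qed

lemma reorder_image_rest:
  "(\<lambda>k. reorder (k + 3)) ` {0..<4*n - 3} = {n} \<union> ({2..<2*n} - {n}) \<union> {2*n + 1..<3*n} \<union> {3*n..<4*n}"
proof
  show "(\<lambda>k. reorder (k + 3)) ` {0..<4*n - 3} \<subseteq> {n} \<union> ({2..<2*n} - {n}) \<union> {2*n + 1..<3*n} \<union> {3*n..<4*n}"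
    using two_le_n by (auto simp: reorder_def)
next
  show "{n} \<union> ({2..<2*n} - {n}) \<union> {2*n + 1..<3*n} \<union> {3*n..<4*n} \<subseteq> (\<lambda>k. reorder (k + 3)) ` {0..<4*n - 3}"
  proof
    fix v
    assume v: "v \<in> {n} \<union> ({2..<2*n} - {n}) \<union> {2*n + 1..<3*n} \<union> {3*n..<4*n}"
    show "v \<in> (\<lambda>k. reorder (k + 3)) ` {0..<4*n - 3}"
    proof (cases "v < 2*n")
      case True
      then show ?thesis
        using v two_le_n by (intro image_eqI[of _ _ "v - 2"]) (auto simp: reorder_def)
    next
      case False
      then show ?thesis
        using v two_le_n by (intro image_eqI[of _ _ "v - 3"]) (auto simp: reorder_def)
    qed
  qed
qed

lemma char_poly_U:
  "char_poly U = [:wZ, 1:] * [:wR, 1:] ^ (2*n - 3) * [:- wF, 1:] ^ (n - 1) * [:wF, 1:] ^ n"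
proof -
  define g where "g v = [:- tcoef v v, 1:]" for v
  have "char_poly U = (\<Prod>a\<leftarrow>diag_mat U. [:- a, 1:])"
    by (rule char_poly_upper_triangular[OF _ U_upper_triangular, of "4*n - 3"]) (simp add: U_def)
  also have "diag_mat U = map (\<lambda>k. tcoef (reorder (k + 3)) (reorder (k + 3))) [0..<4*n - 3]"
    by (auto simp: diag_mat_def U_def intro!: map_cong)
  also have "(\<Prod>a\<leftarrow>map (\<lambda>k. tcoef (reorder (k + 3)) (reorder (k + 3))) [0..<4*n - 3]. [:- a, 1:])
      = (\<Prod>k\<in>{0..<4*n - 3}. g (reorder (k + 3)))"
    using prod.distinct_set_conv_list[of "[0..<4*n - 3]" "\<lambda>k. g (reorder (k + 3))"]
    by (simp add: g_def comp_def)
  also have "\<dots> = (\<Prod>v\<in>(\<lambda>k. reorder (k + 3)) ` {0..<4*n - 3}. g v)"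
    by (subst prod.reindex) (auto simp: inj_on_def reorder_eq_iff)
  also have "\<dots> = g n * (\<Prod>v\<in>{2..<2*n} - {n}. g v) * (\<Prod>v\<in>{2*n + 1..<3*n}. g v) * (\<Prod>v\<in>{3*n..<4*n}. g v)"
    unfolding reorder_image_rest by (subst prod.union_disjoint, simp, simp, force)+ simp
  also have "g n = [:wZ, 1:]"
    using two_le_n by (simp add: g_def tcoef_def)
  also have "(\<Prod>v\<in>{2..<2*n} - {n}. g v) = [:wR, 1:] ^ (2*n - 3)"
    using two_le_n by (simp add: g_def tcoef_def card_Diff_singleton)
  also have "(\<Prod>v\<in>{2*n + 1..<3*n}. g v) = [:- wF, 1:] ^ (n - 1)"
    using two_le_n by (simp add: g_def tcoef_def)
  also have "(\<Prod>v\<in>{3*n..<4*n}. g v) = (\<Prod>v\<in>{3*n..<4*n}. [:wF, 1:])"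
    using two_le_n by (intro prod.cong) (auto simp: g_def tcoef_def)
  also have "\<dots> = [:wF, 1:] ^ n"
    by simp
  finally show ?thesis .
qed

lemma char_poly_Quot:
  "char_poly Quot = [:- wZ, 1:] * [:- (real (2*n - 3) * wR), 1:] * [:- wF, 1:]
     - Polynomial.smult (real (2*n - 2) * wZR * (2 * wZR)) [:- wF, 1:]
     - Polynomial.smult (real (2*n) * wZF * (2 * wZF)) [:- (real (2*n - 3) * wR), 1:]"
proof -
  define M where "M = char_poly_matrix Quot"
  have M: "M \<in> carrier_mat 3 3"
    by (simp add: M_def Quot_def)
  have reorder_012: "reorder 0 = 0" "reorder (Suc 0) = Suc 0" "reorder 2 = 2*n"
    using two_le_n by (auto simp: reorder_def)
  have distinct: "n \<noteq> 0" "2*n \<noteq> 0" "2*n \<noteq> 1" "2*n \<noteq> n" "(1::nat) \<noteq> n" "3*n \<noteq> 0" "3*n \<noteq> 1" "3*n \<noteq> 2*n"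
    using two_le_n by auto
  have entries:
    "M $$ (0,0) = [:- wZ, 1:]" "M $$ (0,1) = [:- (real (2*n - 2) * wZR):]" "M $$ (0,2) = [:- (real (2*n) * wZF):]"
    "M $$ (1,0) = [:- (2 * wZR):]" "M $$ (1,1) = [:- (real (2*n - 3) * wR), 1:]" "M $$ (1,2) = 0"
    "M $$ (2,0) = [:- (2 * wZF):]" "M $$ (2,1) = 0" "M $$ (2,2) = [:- wF, 1:]"
    unfolding M_def by (simp_all add: char_poly_matrix_def Quot_def reorder_012 tcoef_def distinct one_pCons)
  have "char_poly Quot = det M"
    by (simp add: char_poly_def M_def)
  also have "\<dots> = [:- wZ, 1:] * [:- (real (2*n - 3) * wR), 1:] * [:- wF, 1:]
     - Polynomial.smult (real (2*n - 2) * wZR * (2 * wZR)) [:- wF, 1:]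
     - Polynomial.smult (real (2*n) * wZF * (2 * wZF)) [:- (real (2*n - 3) * wR), 1:]"
    unfolding det_3x3[OF M] entries
    by (rule poly_eqI) (simp add: algebra_simps)
  finally show ?thesis .
qed

lemma weight_values:
  "wZ = (real (4*n) - 1) * sqrt 2" "wR = (2 * real n - 1) * sqrt 2" "wF = 3 * sqrt 2"
  "wZR * wZR = (4 * real n - 1)^2 + (2 * real n - 1)^2" "wZF * wZF = (4 * real n - 1)^2 + 9"
  using two_le_n sqrt_double_square[of "real (4*n) - 1"] sqrt_double_square[of "2 * real n - 1"]
    sqrt_double_square[of 3]
  by (simp_all add: weight_def deg_def of_nat_diff)

lemma quotient_offdiagonal_products:
  "real (2*n - 2) * wZR * (2 * wZR) = 8 * (real n - 1) * (10 * (real n)^2 - 6 * real n + 1)"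
  "real (2*n) * wZF * (2 * wZF) = 8 * real n * (8 * (real n)^2 - 4 * real n + 5)"
proof -
  have "real (2*n - 2) * wZR * (2 * wZR) = 2 * real (2*n - 2) * (wZR * wZR)"
    by simp
  also have "\<dots> = 8 * (real n - 1) * (10 * (real n)^2 - 6 * real n + 1)"
    unfolding weight_values(4) using two_le_n by (simp add: of_nat_diff algebra_simps power2_eq_square)
  finally show "real (2*n - 2) * wZR * (2 * wZR) = 8 * (real n - 1) * (10 * (real n)^2 - 6 * real n + 1)" .
  have "real (2*n) * wZF * (2 * wZF) = 4 * real n * (wZF * wZF)"
    by simp
  also have "\<dots> = 8 * real n * (8 * (real n)^2 - 4 * real n + 5)"
    unfolding weight_values(5) by (simp add: algebra_simps power2_eq_square)
  finally show "real (2*n) * wZF * (2 * wZF) = 8 * real n * (8 * (real n)^2 - 4 * real n + 5)" .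
qed

lemma char_poly_S_factorization:
  defines "A \<equiv> [: - (real (4*n) - 1) * sqrt 2, 1 :]"
      and "B \<equiv> [: - ((2 * real n - 1) * (2 * real n - 3)) * sqrt 2, 1 :]"
      and "C \<equiv> [: - 3 * sqrt 2, 1 :]"
  defines "P \<equiv> A * B * C ^ n
              - Polynomial.smult (8 * (real n - 1) * (10 * (real n)^2 - 6 * real n + 1)) (C ^ n)
              - Polynomial.smult (8 * real n * (8 * (real n)^2 - 4 * real n + 5)) (B * C ^ (n - 1))"
  shows "char_poly S = [:(real (4*n) - 1) * sqrt 2, 1:] * [:(2 * real n - 1) * sqrt 2, 1:] ^ (2*n - 3)
    * [:3 * sqrt 2, 1:] ^ n * P"
proof -
  define k1 where "k1 = 8 * (real n - 1) * (10 * (real n)^2 - 6 * real n + 1)"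
  define k2 where "k2 = 8 * real n * (8 * (real n)^2 - 4 * real n + 5)"
  have k1_eq: "real (2*n - 2) * wZR * (2 * wZR) = k1"
    unfolding k1_def by (rule quotient_offdiagonal_products(1))
  have k2_eq: "real (2*n) * wZF * (2 * wZF) = k2"
    unfolding k2_def by (rule quotient_offdiagonal_products(2))
  have A_eq: "[:- wZ, 1:] = A"
    unfolding weight_values(1) A_def by (simp add: algebra_simps)
  have B_eq: "[:- (real (2*n - 3) * wR), 1:] = B"
    using two_le_n unfolding weight_values(2) B_def by (simp add: of_nat_diff algebra_simps)
  have C_eq: "[:- wF, 1:] = C"
    unfolding weight_values(3) C_def by simp
  have "char_poly S = (A * B * C - Polynomial.smult k1 C - Polynomial.smult k2 B)
      * ([:(real (4*n) - 1) * sqrt 2, 1:] * [:(2 * real n - 1) * sqrt 2, 1:] ^ (2*n - 3)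
         * C ^ (n - 1) * [:3 * sqrt 2, 1:] ^ n)"
    unfolding char_poly_S_block char_poly_Quot char_poly_U k1_eq k2_eq A_eq B_eq C_eq
    unfolding weight_values(1-3) ..
  also have "\<dots> = [:(real (4*n) - 1) * sqrt 2, 1:] * [:(2 * real n - 1) * sqrt 2, 1:] ^ (2*n - 3)
      * [:3 * sqrt 2, 1:] ^ n * P"
  proof -
    have "C ^ n = C * C ^ (n - 1)"
      using two_le_n by (simp flip: power_Suc)
    then show ?thesis
      unfolding P_def k1_def[symmetric] k2_def[symmetric]
      by (simp add: algebra_simps del: mult_pCons_left mult_pCons_right)
  qed
  finally show ?thesis .
qed

end

theorem corollary4p2:
  fixes n :: nat
  assumes "n \<ge> 2"
  defines "A \<equiv> [: - (real (4*n) - 1) * sqrt 2, 1 :]"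
      and "B \<equiv> [: - ((2 * real n - 1) * (2 * real n - 3)) * sqrt 2, 1 :]"
      and "C \<equiv> [: - 3 * sqrt 2, 1 :]"
  defines "P \<equiv> A * B * C ^ n
              - Polynomial.smult (8 * (real n - 1) * (10 * (real n)^2 - 6 * real n + 1)) (C ^ n)
              - Polynomial.smult (8 * real n * (8 * (real n)^2 - 4 * real n + 5)) (B * C ^ (n - 1))"
  shows "sombor_spectrum (4*n) (commuting_adj (gen_quaternion_group n)) =
           replicate_mset 1 (complex_of_real (- (real (4*n) - 1) * sqrt 2))
         + replicate_mset (2*n - 3) (complex_of_real (- (2 * real n - 1) * sqrt 2))
         + replicate_mset n (complex_of_real (- 3 * sqrt 2))
         + proots (map_poly complex_of_real P)"
proof -
  interpret quat_commuting_graph n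
    using assms(1) by unfold_locales
  have char_poly_S: "char_poly S = [:(real (4*n) - 1) * sqrt 2, 1:] * [:(2 * real n - 1) * sqrt 2, 1:] ^ (2*n - 3)
      * [:3 * sqrt 2, 1:] ^ n * P"
    unfolding P_def A_def B_def C_def by (rule char_poly_S_factorization)
  have "P \<noteq> 0"
    using char_poly_S char_poly_S_nonzero by auto
  have roots: "[:(real (4*n) - 1) * sqrt 2, 1:] = [:- (- (real (4*n) - 1) * sqrt 2), 1:]"
    "[:(2 * real n - 1) * sqrt 2, 1:] = [:- (- (2 * real n - 1) * sqrt 2), 1:]"
    "[:3 * sqrt 2, 1:] = [:- (- 3 * sqrt 2), 1:]"
    by (simp_all add: algebra_simps)
  show ?thesis
    unfolding sombor_spectrum_commuting_graph char_poly_S roots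
    by (rule proots_of_real_linear_factors) fact
qed

end
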